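(* Let $\ell\geq 2$ be an integer and let $(e_m)_{m\geq0}$ be the sequence defined below. Then $$\gamma=\sum_{n=1}^{2^{\ell-1}-1}\frac1n-(\ell-1)\log 2+\sum_{m=1}^{\infty}\frac{(-1)^{m-1}e_m}{m+1}\sum_{2^{\ell-1}\leq n<2^{\ell}}\frac{1}{n^{m+1}},$$ where $\gamma$ is Euler's constant and the series over $m$ converges. In particular, for $\ell=2$, $\gamma=1-\log 2+\sum_{m\ge1}\frac{(-1)^{m-1}e_m}{m+1}\bigl(2^{-m-1}+3^{-m-1}\bigr)$, and for $\ell=3$, $\gamma=1+\frac12+\frac13-2\log2+\sum_{m\ge1}\frac{(-1)^{m-1}e_m}{m+1}\bigl(4^{-m-1}+5^{-m-1}+6^{-m-1}+7^{-m-1}\bigr)$.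
   Context: The sequence $(e_m)_{m\geq0}$ of rational numbers is defined by $e_0=0$ and, for $m\geq1$, $$e_m=\frac{2^{m+1}+\sum_{j=1}^{m}\binom{m+1}{j}e_{m-j}}{2^{m+1}-2}.$$ (So $e_1=2$, etc.) $\gamma=0.5772\ldots$ denotes Euler's constant. *)

theory Defs
  imports "HOL-Analysis.Analysis"
begin

fun es :: "nat \<Rightarrow> rat list" where
  "es 0 = [0]"
| "es (Suc k) = (let m = Suc k; xs = es k in
     xs @ [(2 ^ (m + 1) + (\<Sum>j=1..m. of_nat ((m + 1) choose j) * xs ! (m - j)))
            / (2 ^ (m + 1) - 2)])"

definition e_seq :: "nat \<Rightarrow> rat" where
  "e_seq m = es m ! m"

lemma e_seq_0: "e_seq 0 = 0"
  by (simp add: e_seq_def)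

end

theory Submission
  imports Defs
begin

text \<open>Put d_k = (-1)^k e_(k-1) / k and phi z = sum_k d_k z^k, so that the m-th term of the
  series is the sum over the block 2^(l-1) <= n < 2^l of the (m+2)-th term of phi (1/n).
  Expanding phi (u/(1+u)) as an absolutely convergent double series, the recurrence defining e_m
  becomes exactly the coefficient identity behind the functional equation
  phi (2u) - phi u - phi (u/(1+u)) = 2u - ln (1 + 2u).
  With u = 1/(2n) it reads phi (1/(2n)) + phi (1/(2n+1)) = phi (1/n) - 1/n + ln (n+1) - ln n,
  so G N = H_(N-1) - ln N + sum_(N <= n < 2N) phi (1/n) satisfies G (2N) = G N.
  As phi z = O(z^2), G N tends to Euler's constant, hence G N = gamma for all N >= 2;
  N = 2^(l-1) is the theorem.\<close>

lemma length_es: "length (es k) = Suc k"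
  by (induction k) (simp_all add: Let_def)

lemma nth_es: "i \<le> k \<Longrightarrow> es k ! i = e_seq i"
proof (induction k)
  case 0
  then show ?case by (simp add: e_seq_def)
next
  case (Suc k)
  then show ?case
    by (cases "i = Suc k") (simp_all add: e_seq_def Let_def nth_append length_es)
qed

lemma e_seq_Suc:
  "e_seq (Suc k) = (2 ^ (k + 2) + (\<Sum>j=1..Suc k. of_nat ((k + 2) choose j) * e_seq (Suc k - j)))
     / (2 ^ (k + 2) - 2)"
proof -
  have "(\<Sum>j=1..Suc k. of_nat ((k + 2) choose j) * es k ! (Suc k - j))
      = (\<Sum>j=1..Suc k. of_nat ((k + 2) choose j) * e_seq (Suc k - j))"
    by (intro sum.cong refl) (auto intro!: nth_es)
  then show ?thesis
    by (simp add: e_seq_def Let_def nth_append length_es)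
qed

lemma two_less_two_power: "m \<ge> 1 \<Longrightarrow> (2::'a::linordered_semidom) < 2 ^ (m + 1)"
  using power_strict_increasing[of 1 "m + 1" "2::'a"] by simp

abbreviation e_real :: "nat \<Rightarrow> real" where
  "e_real m \<equiv> real_of_rat (e_seq m)"

lemma e_real_0: "e_real 0 = 0"
  by (simp add: e_seq_0)

lemma e_real_recurrence:
  assumes "m \<ge> 1"
  shows "e_real m * (2 ^ (m + 1) - 2) = 2 ^ (m + 1) + (\<Sum>i<m. e_real i * ((m + 1) choose (i + 1)))"
proof -
  obtain k where m: "m = Suc k"
    using assms by (cases m) auto
  have "(2::rat) ^ (m + 1) - 2 \<noteq> 0"
    using two_less_two_power[OF assms, where 'a=rat] by linarith
  moreover have "(\<Sum>j=1..m. of_nat ((m + 1) choose j) * e_seq (m - j))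
      = (\<Sum>i<m. of_nat ((m + 1) choose (m - i)) * e_seq i)"
    by (rule sum.reindex_bij_witness[of _ "\<lambda>i. m - i" "\<lambda>j. m - j"]) auto
  moreover have "(m + 1) choose (m - i) = (m + 1) choose (i + 1)" if "i < m" for i
    using that by (subst binomial_symmetric) auto
  ultimately have "e_seq m * (2 ^ (m + 1) - 2)
      = 2 ^ (m + 1) + (\<Sum>i<m. e_seq i * of_nat ((m + 1) choose (i + 1)))"
    using e_seq_Suc[of k] unfolding m by (simp add: mult.commute)
  then have "real_of_rat (e_seq m * (2 ^ (m + 1) - 2))
      = real_of_rat (2 ^ (m + 1) + (\<Sum>i<m. e_seq i * of_nat ((m + 1) choose (i + 1))))"
    by (rule arg_cong)
  then show ?thesis
    by (simp add: of_rat_mult of_rat_add of_rat_diff of_rat_sum of_rat_power)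
qed

lemma e_real_nonneg: "e_real m \<ge> 0"
proof (induction m rule: less_induct)
  case (less m)
  show ?case
  proof (cases "m = 0")
    case False
    then have m: "m \<ge> 1"
      by simp
    have "0 \<le> e_real m * (2 ^ (m + 1) - 2)"
      unfolding e_real_recurrence[OF m] using less
      by (intro add_nonneg_nonneg sum_nonneg mult_nonneg_nonneg) auto
    moreover have "(2::real) ^ (m + 1) - 2 > 0"
      using two_less_two_power[OF m, where 'a=real] by linarith
    ultimately show ?thesis by (simp add: zero_le_mult_iff)
  qed (simp add: e_real_0)
qed

lemma e_real_1: "e_real 1 = 2"
  using e_real_recurrence[of 1] by (simp add: e_real_0)

lemma sum_Suc_times_binomial: "(\<Sum>i<m. real (i + 1) * ((m + 1) choose (i + 1))) = real (m + 1) * (2 ^ m - 1)"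
proof -
  have "(\<Sum>i<m. real (i + 1) * ((m + 1) choose (i + 1))) = (\<Sum>i<m. real (m + 1) * (m choose i))"
    by (intro sum.cong refl) (metis Suc_eq_plus1 Suc_times_binomial of_nat_mult)
  also have "\<dots> = (m + 1) * ((\<Sum>i\<le>m. real (m choose i)) - 1)"
    by (simp add: sum_distrib_left lessThan_Suc_atMost[symmetric])
  also have "(\<Sum>i\<le>m. real (m choose i)) = 2 ^ m"
    using choose_row_sum[of m] by (metis of_nat_numeral of_nat_power of_nat_sum)
  finally show ?thesis .
qed

lemma e_real_le: "e_real m \<le> real m + 1"
proof (induction m rule: less_induct)
  case (less m)
  consider "m = 0" | "m = 1" | "m \<ge> 2" by linarith
  then show ?case
  proof cases
    case 3
    have pow: "(4::real) \<le> 2 ^ m"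
      using power_increasing[OF 3, of "2::real"] by simp
    have "e_real m * (2 ^ (m + 1) - 2) \<le> 2 ^ (m + 1) + (\<Sum>i<m. real (i + 1) * ((m + 1) choose (i + 1)))"
      unfolding e_real_recurrence[of m, OF order.trans[OF one_le_numeral 3]] using less
      by (intro add_left_mono sum_mono mult_right_mono) (auto simp: add.commute)
    also have "\<dots> = 2 ^ (m + 1) + real (m + 1) * (2 ^ m - 1)"
      by (simp only: sum_Suc_times_binomial)
    also have "\<dots> \<le> (real m + 1) * (2 ^ (m + 1) - 2)"
    proof -
      have "3 * (2 ^ m - 1) \<le> (real m + 1) * (2 ^ m - 1)"
        using 3 pow by (intro mult_right_mono) auto
      then show ?thesis using pow by (simp add: algebra_simps)
    qed
    finally show ?thesis
      using pow by (simp add: mult_le_cancel_right)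
  qed (use e_real_0 e_real_1 in auto)
qed

definition phi_coeff :: "nat \<Rightarrow> real" where
  "phi_coeff k = (if k = 0 then 0 else (-1) ^ k * e_real (k - 1) / k)"

definition phi :: "real \<Rightarrow> real" where
  "phi z = (\<Sum>k. phi_coeff k * z ^ k)"

lemma abs_phi_coeff_le_1: "\<bar>phi_coeff k\<bar> \<le> 1"
  using e_real_nonneg[of "k - 1"] e_real_le[of "k - 1"]
  by (cases k) (auto simp: phi_coeff_def abs_mult)

lemma phi_sums:
  assumes "\<bar>z\<bar> < 1"
  shows "(\<lambda>k. phi_coeff k * z ^ k) sums phi z"
proof -
  have "norm (phi_coeff k * z ^ k) \<le> \<bar>z\<bar> ^ k" for k
    using abs_phi_coeff_le_1[of k] by (simp add: abs_mult power_abs mult_left_le_one_le)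
  then have "summable (\<lambda>k. phi_coeff k * z ^ k)"
    using assms by (intro summable_comparison_test[OF _ summable_geometric[of "\<bar>z\<bar>"]]) auto
  then show ?thesis
    unfolding phi_def by (rule summable_sums)
qed

lemma phi_sums_from_2:
  assumes "\<bar>z\<bar> < 1"
  shows "(\<lambda>m. phi_coeff (m + 2) * z ^ (m + 2)) sums phi z"
proof -
  have "(\<Sum>k<2. phi_coeff k * z ^ k) = 0"
    by (simp add: numeral_2_eq_2 phi_coeff_def e_real_0)
  then show ?thesis
    using sums_iff_shift[of "\<lambda>k. phi_coeff k * z ^ k" 2] phi_sums[OF assms] by simp
qed

lemma abs_phi_le:
  assumes "\<bar>z\<bar> \<le> 1/2"
  shows "\<bar>phi z\<bar> \<le> 2 * z\<^sup>2"
proof -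
  have "(\<lambda>m. \<bar>z\<bar> ^ m) sums (1 / (1 - \<bar>z\<bar>))"
    using assms by (intro geometric_sums) simp
  from sums_mult[OF this, of "z\<^sup>2"]
  have geom: "(\<lambda>m. z\<^sup>2 * \<bar>z\<bar> ^ m) sums (z\<^sup>2 / (1 - \<bar>z\<bar>))"
    by simp
  have le: "norm (phi_coeff (m + 2) * z ^ (m + 2)) \<le> z\<^sup>2 * \<bar>z\<bar> ^ m" for m
  proof -
    have "norm (phi_coeff (m + 2) * z ^ (m + 2)) \<le> \<bar>z\<bar> ^ (m + 2)"
      using abs_phi_coeff_le_1[of "m + 2"] by (simp add: abs_mult power_abs mult_left_le_one_le)
    also have "\<bar>z\<bar> ^ (m + 2) = z\<^sup>2 * \<bar>z\<bar> ^ m"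
      by (simp add: power_add power2_eq_square)
    finally show ?thesis .
  qed
  have "\<bar>phi z\<bar> \<le> z\<^sup>2 / (1 - \<bar>z\<bar>)"
    using norm_sums_le[OF phi_sums_from_2 geom le] assms by simp
  also have "\<dots> = z\<^sup>2 * (1 / (1 - \<bar>z\<bar>))"
    by simp
  also have "\<dots> \<le> z\<^sup>2 * 2"
    using assms by (intro mult_left_mono) (auto simp: field_simps)
  finally show ?thesis
    by simp
qed

lemma double_series_diagonal_sums:
  fixes A :: "nat \<times> nat \<Rightarrow> 'a::banach"
  assumes dom: "\<And>k j. norm (A (k, j)) \<le> B k j"
    and B_rows: "\<And>k. (\<lambda>j. B k j) sums Bs k" and "summable Bs"
    and A_rows: "\<And>k. (\<lambda>j. A (k, j)) sums r k"
  shows "(\<lambda>n. \<Sum>k\<le>n. A (k, n - k)) sums (\<Sum>k. r k)"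
proof -
  have B_nonneg: "0 \<le> B k j" for k j
    using dom[of k j] norm_ge_zero order_trans by blast
  have "Bs k \<ge> 0" for k
    using B_rows[of k] B_nonneg by (metis sums_unique suminf_nonneg sums_summable)
  then have "Bs summable_on UNIV"
    using \<open>summable Bs\<close> summable_on_UNIV_nonneg_real_iff by blast
  then have "(\<lambda>p. B (fst p) (snd p)) summable_on Sigma UNIV (\<lambda>_. UNIV)"
    using B_rows B_nonneg by (intro summable_on_SigmaI[where g = Bs]) (auto intro: sums_nonneg_imp_has_sum)
  then have "(\<lambda>p. norm (A p)) summable_on UNIV"
    unfolding UNIV_Times_UNIV by (rule summable_on_comparison_test) (use dom in auto)
  then have "A summable_on UNIV"
    by (rule abs_summable_summable)
  then obtain S where S: "(A has_sum S) UNIV"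
    unfolding summable_on_def by blast
  have rows: "((\<lambda>j. A (k, j)) has_sum r k) UNIV" for k
  proof (rule norm_summable_imp_has_sum[OF _ A_rows])
    show "summable (\<lambda>j. norm (A (k, j)))"
      by (rule summable_comparison_test'[OF sums_summable[OF B_rows[of k]]]) (simp add: dom)
  qed
  have "(A has_sum S) (Sigma UNIV (\<lambda>_. UNIV))"
    using S by simp
  then have "(r has_sum S) UNIV"
    by (rule has_sum_SigmaD) (use rows in auto)
  then have "(\<Sum>k. r k) = S"
    using has_sum_imp_sums sums_unique by blast
  have "(A has_sum S) UNIV \<longleftrightarrow> ((\<lambda>p. A (snd p, fst p - snd p)) has_sum S) (Sigma UNIV (\<lambda>n. {..n}))"
    by (rule has_sum_reindex_bij_witness[where i = "\<lambda>p. (snd p, fst p - snd p)"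
        and j = "\<lambda>p. (fst p + snd p, fst p)"]) auto
  then have "((\<lambda>p. A (snd p, fst p - snd p)) has_sum S) (Sigma UNIV (\<lambda>n. {..n}))"
    using S by blast
  then have "((\<lambda>n. \<Sum>k\<le>n. A (k, n - k)) has_sum S) UNIV"
    by (rule has_sum_SigmaD) auto
  then show ?thesis
    unfolding \<open>(\<Sum>k. r k) = S\<close> by (rule has_sum_imp_sums)
qed

lemma gbinomial_shifted_of_nat: "(real k + real j - 1) gchoose j = real ((k + j - 1) choose j)"
proof (cases j)
  case (Suc i)
  then have "real k + real j - 1 = real (k + j - 1)"
    by simp
  then show ?thesis
    by (simp only: binomial_gbinomial)
qed simp

lemma negative_binomial_sums:
  fixes u :: real
  assumes "\<bar>u\<bar> < 1"
  shows "(\<lambda>j. real ((k + j - 1) choose j) * u ^ j) sums (1 / (1 - u) ^ k)"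
proof -
  have "(\<lambda>j. ((- real k) gchoose j) * (- u) ^ j) sums (1 + - u) powr (- real k)"
    using assms by (intro gen_binomial_real) simp
  moreover have "((- real k) gchoose j) * (- u) ^ j = real ((k + j - 1) choose j) * u ^ j" for j
  proof -
    have "((- real k) gchoose j) * (- u) ^ j
        = ((-1) ^ j * (-1) ^ j) * real ((k + j - 1) choose j) * u ^ j"
      by (simp only: gbinomial_minus gbinomial_shifted_of_nat power_minus[of u] mult_ac)
    then show ?thesis
      by (simp flip: power_add)
  qed
  moreover have "(1 + - u) powr (- real k) = 1 / (1 - u) ^ k"
    using assms by (simp add: powr_minus powr_realpow divide_inverse)
  ultimately show ?thesis
    by simp
qed

definition phi_comp_coeff :: "nat \<Rightarrow> real" where
  "phi_comp_coeff n = (-1) ^ n / n * (\<Sum>i<n. e_real i * (n choose (i + 1)))"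

lemma phi_comp_coeff_convolution:
  "(\<Sum>k\<le>n. phi_coeff k * ((-1) ^ (n - k) * real ((k + (n - k) - 1) choose (n - k))))
     = phi_comp_coeff n"
proof (cases n)
  case (Suc p)
  have "phi_coeff (Suc i) * ((-1) ^ (n - Suc i) * real ((Suc i + (n - Suc i) - 1) choose (n - Suc i)))
      = (-1) ^ n / n * (e_real i * (n choose (i + 1)))" if "i \<le> p" for i
  proof -
    have sign: "(-1::real) ^ Suc i * (-1) ^ (p - i) = (-1) ^ n"
      using that by (simp add: Suc flip: power_add)
    have "real (p choose i) * real n = real (n choose (i + 1)) * real (Suc i)"
      using Suc_times_binomial[of i p] unfolding Suc by (metis Suc_eq_plus1 mult.commute of_nat_mult)
    then have ratio: "real (p choose i) / real (Suc i) = real (n choose (i + 1)) / real n"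
      using frac_eq_eq[of "real (Suc i)" "real n"] Suc by simp
    have "(Suc i + (n - Suc i) - 1) choose (n - Suc i) = p choose i"
      using that by (simp add: Suc binomial_symmetric[symmetric])
    then have "phi_coeff (Suc i) * ((-1) ^ (n - Suc i) * real ((Suc i + (n - Suc i) - 1) choose (n - Suc i)))
        = (-1) ^ Suc i * e_real i / real (Suc i) * ((-1) ^ (p - i) * real (p choose i))"
      by (simp add: phi_coeff_def Suc del: of_nat_Suc power_Suc)
    also have "\<dots> = ((-1) ^ Suc i * (-1) ^ (p - i)) * e_real i * (real (p choose i) / real (Suc i))"
      by (simp only: divide_inverse mult_ac)
    also have "\<dots> = (-1) ^ n * e_real i * (real (n choose (i + 1)) / real n)"
      by (simp only: sign ratio)
    also have "\<dots> = (-1) ^ n / n * (e_real i * (n choose (i + 1)))"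
      by (simp only: divide_inverse mult_ac)
    finally show ?thesis .
  qed
  then have "(\<Sum>i\<le>p. phi_coeff (Suc i) * ((-1) ^ (n - Suc i) * real ((Suc i + (n - Suc i) - 1) choose (n - Suc i))))
      = (\<Sum>i<n. (-1) ^ n / n * (e_real i * (n choose (i + 1))))"
    unfolding Suc lessThan_Suc_atMost by (intro sum.cong) auto
  then show ?thesis
    unfolding phi_comp_coeff_def sum_distrib_left
    by (simp only: Suc sum.atMost_Suc_shift) (simp add: phi_coeff_def)
qed (simp add: phi_coeff_def phi_comp_coeff_def)

lemma phi_coeff_identity:
  "phi_coeff n * (2 ^ n - 1) - phi_comp_coeff n = (-1) ^ n * 2 ^ n / n + (if n = 1 then 2 else 0)"
proof (cases n)
  case (Suc p)
  have "(\<Sum>i<n. e_real i * (n choose (i + 1))) = e_real p + (\<Sum>i<p. e_real i * (n choose (i + 1)))"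
    by (simp add: Suc)
  moreover have "e_real p * (2 ^ n - 2) - (\<Sum>i<p. e_real i * (n choose (i + 1)))
      = 2 ^ n - (if n = 1 then 2 else 0)"
    using e_real_recurrence[of p] by (cases "p = 0") (simp_all add: Suc e_real_0)
  ultimately have rec: "e_real p * (2 ^ n - 1) - (\<Sum>i<n. e_real i * (n choose (i + 1)))
      = 2 ^ n - (if n = 1 then 2 else 0)"
    by (simp add: algebra_simps)
  have "phi_coeff n = (-1) ^ n / n * e_real p"
    by (simp add: phi_coeff_def Suc)
  then have "phi_coeff n * (2 ^ n - 1) - phi_comp_coeff n
      = (-1) ^ n / n * (e_real p * (2 ^ n - 1) - (\<Sum>i<n. e_real i * (n choose (i + 1))))"
    by (simp add: phi_comp_coeff_def right_diff_distrib)
  also have "\<dots> = (-1) ^ n * 2 ^ n / n + (if n = 1 then 2 else 0)"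
    unfolding rec by (cases "n = 1") simp_all
  finally show ?thesis .
qed (simp add: phi_coeff_def phi_comp_coeff_def)

lemma phi_comp_sums:
  assumes u: "\<bar>u\<bar> < 1/2"
  shows "(\<lambda>n. phi_comp_coeff n * u ^ n) sums phi (u / (1 + u))"
proof -
  \<comment> \<open>Expand each (u/(1+u))^k = u^k (1+u)^-k by the negative binomial series;
    the diagonal sums collect the coefficient of u^n.\<close>
  define A where "A p = phi_coeff (fst p) * u ^ fst p
    * ((-1) ^ snd p * real ((fst p + snd p - 1) choose snd p) * u ^ snd p)" for p
  define B where "B k j = \<bar>u\<bar> ^ k * (real ((k + j - 1) choose j) * \<bar>u\<bar> ^ j)" for k j
  have "norm (A (k, j)) \<le> B k j" for k j
    using abs_phi_coeff_le_1[of k]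
    by (auto simp: A_def B_def abs_mult power_abs mult_left_le_one_le mult_ac)
  moreover have "(\<lambda>j. B k j) sums ((\<bar>u\<bar> / (1 - \<bar>u\<bar>)) ^ k)" for k
    using sums_mult[OF negative_binomial_sums[of "\<bar>u\<bar>" k], of "\<bar>u\<bar> ^ k"] u
    by (simp add: B_def power_divide)
  moreover have "summable (\<lambda>k. (\<bar>u\<bar> / (1 - \<bar>u\<bar>)) ^ k)"
    using u by (intro summable_geometric) (simp add: field_simps)
  moreover have "(\<lambda>j. A (k, j)) sums (phi_coeff k * (u / (1 + u)) ^ k)" for k
  proof -
    have "(\<lambda>j. real ((k + j - 1) choose j) * (- u) ^ j) sums (1 / (1 - - u) ^ k)"
      using u by (intro negative_binomial_sums) simp
    then have "(\<lambda>j. (-1) ^ j * real ((k + j - 1) choose j) * u ^ j) sums (1 / (1 + u) ^ k)"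
      by (simp add: power_minus[of u] mult_ac)
    from sums_mult[OF this, of "phi_coeff k * u ^ k"] show ?thesis
      by (simp add: A_def power_divide)
  qed
  ultimately have "(\<lambda>n. \<Sum>k\<le>n. A (k, n - k)) sums (\<Sum>k. phi_coeff k * (u / (1 + u)) ^ k)"
    by (rule double_series_diagonal_sums)
  moreover have "(\<Sum>k\<le>n. A (k, n - k)) = phi_comp_coeff n * u ^ n" for n
  proof -
    have "A (k, n - k) = phi_coeff k * ((-1) ^ (n - k) * real ((k + (n - k) - 1) choose (n - k))) * u ^ n"
      if "k \<le> n" for k
      using that by (simp add: A_def mult_ac flip: power_add)
    then show ?thesis
      by (simp add: sum_distrib_right phi_comp_coeff_convolution[symmetric])
  qed
  moreover have "(\<Sum>k. phi_coeff k * (u / (1 + u)) ^ k) = phi (u / (1 + u))"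
    by (simp add: phi_def)
  ultimately show ?thesis
    by simp
qed

lemma phi_functional_equation:
  assumes u: "\<bar>u\<bar> < 1/2"
  shows "phi (2 * u) - phi u - phi (u / (1 + u)) = 2 * u - ln (1 + 2 * u)"
proof -
  have "(\<lambda>n. phi_coeff n * (2 * u) ^ n - phi_coeff n * u ^ n - phi_comp_coeff n * u ^ n)
      sums (phi (2 * u) - phi u - phi (u / (1 + u)))"
    using u by (intro sums_diff phi_sums phi_comp_sums) auto
  moreover have "phi_coeff n * (2 * u) ^ n - phi_coeff n * u ^ n - phi_comp_coeff n * u ^ n
      = ((-1) ^ n * 2 ^ n / n + (if n = 1 then 2 else 0)) * u ^ n" for n
  proof -
    have "phi_coeff n * (2 * u) ^ n - phi_coeff n * u ^ n - phi_comp_coeff n * u ^ n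
        = (phi_coeff n * (2 ^ n - 1) - phi_comp_coeff n) * u ^ n"
      by (simp add: power_mult_distrib algebra_simps)
    then show ?thesis
      by (simp only: phi_coeff_identity)
  qed
  moreover have "(\<lambda>n. ((-1) ^ n * 2 ^ n / n + (if n = 1 then 2 else 0)) * u ^ n)
      sums (- ln (1 + 2 * u) + 2 * u)"
  proof (rule sums_add[THEN sums_cong[THEN iffD1, rotated]])
    have "(\<lambda>n. - ((- (2 * u)) ^ n) / n) sums ln (1 + 2 * u)"
      using u by (intro ln_series') simp
    from sums_minus[OF this]
    show "(\<lambda>n. (-1) ^ n * 2 ^ n / n * u ^ n) sums (- ln (1 + 2 * u))"
      by (simp add: power_minus[of "2 * u"] power_mult_distrib mult.assoc)
    have "(\<lambda>n. (if n = 1 then 2 else 0) * u ^ n) = (\<lambda>n. if n = 1 then 2 * u ^ n else 0)"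
      by auto
    then show "(\<lambda>n. (if n = 1 then 2 else 0) * u ^ n) sums (2 * u)"
      using sums_single[of 1 "\<lambda>n. 2 * u ^ n"] by simp
  qed (simp add: algebra_simps)
  ultimately show ?thesis
    using sums_unique2 by fastforce
qed

lemma phi_reciprocal_equation:
  assumes "x > 1"
  shows "phi (1 / (2 * x)) + phi (1 / (2 * x + 1)) = phi (1 / x) - 1 / x + (ln (x + 1) - ln x)"
proof -
  define u where "u = 1 / (2 * x)"
  have "\<bar>u\<bar> < 1/2"
    using assms by (simp add: u_def)
  moreover have "2 * u = 1 / x" and "u / (1 + u) = 1 / (2 * x + 1)"
    using assms by (simp_all add: u_def field_simps)
  moreover have "ln (1 + 2 * u) = ln (x + 1) - ln x"
    using assms by (simp add: u_def field_simps ln_div)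
  ultimately show ?thesis
    using phi_functional_equation[of u] by (simp add: u_def)
qed

lemma harm_eq_harm_pred_plus:
  assumes "n \<ge> 1"
  shows "harm n = harm (n - 1) + 1 / (real n)"
  using assms harm_Suc[of "n - 1", where 'a = real] by (simp add: inverse_eq_divide)

lemma sum_reciprocals_eq_harm_diff:
  assumes "1 \<le> M" "M \<le> N"
  shows "(\<Sum>n\<in>{M..<N}. 1 / real n) = harm (N - 1) - harm (M - 1)"
proof -
  have "(\<Sum>n\<in>{M..<N}. 1 / real n) = (\<Sum>n\<in>{M..<N}. harm (Suc n - 1) - harm (n - 1))"
    using assms(1) by (intro sum.cong) (auto simp: harm_eq_harm_pred_plus)
  also have "\<dots> = harm (N - 1) - harm (M - 1)"
    using sum_Suc_diff'[OF assms(2), of "\<lambda>n. harm (n - 1)"] by simp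
  finally show ?thesis .
qed

definition gamma_approx :: "nat \<Rightarrow> real" where
  "gamma_approx N = harm (N - 1) - ln N + (\<Sum>n\<in>{N..<2 * N}. phi (1 / real n))"

lemma gamma_approx_double:
  assumes N: "N \<ge> 2"
  shows "gamma_approx (2 * N) = gamma_approx N"
proof -
  have "{2 * N..<2 * (2 * N)} = {2 * N..Suc (2 * (2 * N - 1))}" "{N..<2 * N} = {N..2 * N - 1}"
    using N by auto
  then have "(\<Sum>n\<in>{2 * N..<2 * (2 * N)}. phi (1 / real n))
      = (\<Sum>n\<in>{N..<2 * N}. phi (1 / real (2 * n)) + phi (1 / real (Suc (2 * n))))"
    by (simp only: sum.in_pairs)
  also have "\<dots> = (\<Sum>n\<in>{N..<2 * N}. phi (1 / (2 * real n)) + phi (1 / (2 * real n + 1)))"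
    by (simp add: add.commute)
  also have "\<dots> = (\<Sum>n\<in>{N..<2 * N}. phi (1 / real n) - 1 / n + (ln (real n + 1) - ln n))"
    using N by (intro sum.cong refl phi_reciprocal_equation) auto
  also have "\<dots> = (\<Sum>n\<in>{N..<2 * N}. phi (1 / real n)) - (\<Sum>n\<in>{N..<2 * N}. 1 / real n)
      + (\<Sum>n\<in>{N..<2 * N}. ln (Suc n) - ln n)"
    by (simp add: sum.distrib sum_subtractf add.commute)
  also have "(\<Sum>n\<in>{N..<2 * N}. 1 / real n) = harm (2 * N - 1) - harm (N - 1)"
    using N by (intro sum_reciprocals_eq_harm_diff) auto
  also have "(\<Sum>n\<in>{N..<2 * N}. ln (Suc n) - ln n) = ln (2 * N) - ln N"
    using sum_Suc_diff'[of N "2 * N" "\<lambda>n. ln (real n)"] by simp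
  finally show ?thesis
    unfolding gamma_approx_def by simp
qed

lemma abs_phi_block_le:
  fixes N :: nat
  assumes "N \<ge> 2"
  shows "\<bar>\<Sum>n\<in>{N..<2 * N}. phi (1 / real n)\<bar> \<le> 2 / N"
proof -
  have "\<bar>phi (1 / real n)\<bar> \<le> 2 / real N ^ 2" if "n \<in> {N..<2 * N}" for n
  proof -
    have "\<bar>phi (1 / real n)\<bar> \<le> 2 * (1 / n)\<^sup>2"
      using that assms by (intro abs_phi_le) auto
    also have "\<dots> \<le> 2 * (1 / N)\<^sup>2"
      using that assms by (intro mult_left_mono power_mono) (auto simp: field_simps)
    finally show ?thesis
      by (simp add: power_divide)
  qed
  then have "\<bar>\<Sum>n\<in>{N..<2 * N}. phi (1 / real n)\<bar> \<le> real (card {N..<2 * N}) * (2 / real N ^ 2)"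
    by (intro order.trans[OF sum_abs sum_bounded_above]) auto
  also have "\<dots> = 2 / N"
    using assms by (simp add: power2_eq_square)
  finally show ?thesis .
qed

lemma gamma_approx_tendsto: "gamma_approx \<longlonglongrightarrow> euler_mascheroni"
proof -
  have "\<forall>\<^sub>F N in sequentially. norm (\<Sum>n\<in>{N..<2 * N}. phi (1 / real n)) \<le> 2 / real N"
    by (intro eventually_sequentiallyI[of 2]) (simp add: abs_phi_block_le)
  then have "(\<lambda>N. \<Sum>n\<in>{N..<2 * N}. phi (1 / real n)) \<longlonglongrightarrow> 0"
    by (rule Lim_null_comparison) (rule lim_const_over_n)
  then have "(\<lambda>N. (harm N - ln N) - 1 / N + (\<Sum>n\<in>{N..<2 * N}. phi (1 / real n)))
      \<longlonglongrightarrow> euler_mascheroni - 0 + 0"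
    by (intro tendsto_intros euler_mascheroni_LIMSEQ lim_const_over_n)
  moreover have "\<forall>\<^sub>F N in sequentially.
      (harm N - ln N) - 1 / N + (\<Sum>n\<in>{N..<2 * N}. phi (1 / real n)) = gamma_approx N"
    by (intro eventually_sequentiallyI[of 1]) (simp add: gamma_approx_def harm_eq_harm_pred_plus)
  ultimately show ?thesis
    by (simp add: tendsto_cong)
qed

lemma gamma_approx_eq_euler_mascheroni:
  assumes "N \<ge> 2"
  shows "gamma_approx N = euler_mascheroni"
proof -
  have "strict_mono (\<lambda>j. 2 ^ j * N)"
    using assms by (intro strict_monoI_Suc) simp
  then have "(\<lambda>j. gamma_approx (2 ^ j * N)) \<longlonglongrightarrow> euler_mascheroni"
    using LIMSEQ_subseq_LIMSEQ[OF gamma_approx_tendsto] by (simp add: o_def)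
  moreover have "gamma_approx (2 ^ j * N) = gamma_approx N" for j
  proof (induction j)
    case (Suc j)
    have "2 ^ j * N \<ge> 2"
      using assms order_trans[of 2 N "2 ^ j * N"] by simp
    then show ?case
      using gamma_approx_double[of "2 ^ j * N"] Suc by (simp add: mult.assoc)
  qed simp
  ultimately have "(\<lambda>j. gamma_approx N) \<longlonglongrightarrow> euler_mascheroni"
    by simp
  then show ?thesis
    by (rule LIMSEQ_unique[OF tendsto_const])
qed

theorem theorem1:
  fixes l :: nat
  assumes "l \<ge> 2"
  shows "summable (\<lambda>m. (-1) ^ m * real_of_rat (e_seq (m + 1)) / real (m + 2)
            * (\<Sum>n\<in>{2 ^ (l - 1)..<2 ^ l}. 1 / real n ^ (m + 2)))
       \<and> euler_mascheroni =
           (\<Sum>n=1..2 ^ (l - 1) - 1. 1 / real n) - real (l - 1) * ln 2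
           + (\<Sum>m. (-1) ^ m * real_of_rat (e_seq (m + 1)) / real (m + 2)
               * (\<Sum>n\<in>{2 ^ (l - 1)..<2 ^ l}. 1 / real n ^ (m + 2)))"
proof -
  define N :: nat where "N = 2 ^ (l - 1)"
  have N: "N \<ge> 2" "2 ^ l = 2 * N"
    using assms power_increasing[of 1 "l - 1" "2::nat"] by (auto simp: N_def simp flip: power_Suc)
  have "(\<lambda>m. \<Sum>n\<in>{N..<2 * N}. phi_coeff (m + 2) * (1 / real n) ^ (m + 2))
      sums (\<Sum>n\<in>{N..<2 * N}. phi (1 / real n))"
    using N by (intro sums_sum phi_sums_from_2) auto
  moreover have "(\<Sum>n\<in>{N..<2 * N}. phi_coeff (m + 2) * (1 / real n) ^ (m + 2))
      = (-1) ^ m * e_real (m + 1) / real (m + 2) * (\<Sum>n\<in>{N..<2 * N}. 1 / real n ^ (m + 2))" for m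
    by (simp add: phi_coeff_def sum_distrib_left power_one_over)
  ultimately have series: "(\<lambda>m. (-1) ^ m * e_real (m + 1) / real (m + 2)
      * (\<Sum>n\<in>{N..<2 * N}. 1 / real n ^ (m + 2))) sums (\<Sum>n\<in>{N..<2 * N}. phi (1 / real n))"
    by simp
  have "(\<Sum>n=1..N - 1. 1 / real n) = harm (N - 1)"
    by (simp add: harm_def inverse_eq_divide)
  moreover have "real (l - 1) * ln 2 = ln N"
    by (simp add: N_def ln_realpow)
  ultimately show ?thesis
    using series gamma_approx_eq_euler_mascheroni[OF N(1)]
    unfolding N(2) N_def[symmetric] gamma_approx_def by (auto simp: sums_iff)
qed

end
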